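(* Let $\lambda>0$ and let $D$ be an edge-minimal $\lambda$-counterexample. Let $S \subseteq V(D)$ be a set of vertices such that $N_1^+(S)$ is non-empty. Then $d_2^+(S) < \lambda\, d_1^+(S)$.
   Context: All digraphs are finite oriented simple graphs: no loops, no multiple edges, and no directed 2-cycles. For vertices $u,v$ of a digraph $D$, $d(u,v)$ is the length of a shortest directed path from $u$ to $v$, with the convention that $d(v,v)$ is the length of a shortest directed cycle through $v$ (not $0$). $N_k^+(v)$ is the set of vertices $u$ with $d(v,u)=k$, and $d_k^+(v)=|N_k^+(v)|$. For a set of vertices $S$, $N_k^+(S)$ is the set of vertices $u$ with $\min_{s\in S} d(s,u)=k$ (so $S$ may intersect $N_k^+(S)$), and $d_k^+(S)=|N_k^+(S)|$. A digraph $D$ is a $\lambda$-counterexample if $d_2^+(v) < \lambda d_1^+(v)$ for every vertex $v$ of $D$. It is an edge-minimal $\lambda$-counterexample if no digraph obtained from $D$ by deleting one or more edges (keeping all vertices) is a $\lambda$-counterexample. *)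

theory Defs
  imports Complex_Main
begin

definition digraph :: "'a set \<Rightarrow> ('a \<times> 'a) set \<Rightarrow> bool" where
  "digraph V E \<longleftrightarrow> finite V \<and> E \<subseteq> V \<times> V \<and> (\<forall>v. (v, v) \<notin> E)
     \<and> (\<forall>u v. (u, v) \<in> E \<longrightarrow> (v, u) \<notin> E)"

text \<open>For u = w this is the length of a shortest
  directed cycle through u.\<close>
definition dist_is :: "('a \<times> 'a) set \<Rightarrow> 'a \<Rightarrow> 'a \<Rightarrow> nat \<Rightarrow> bool" where
  "dist_is E u w k \<longleftrightarrow> 0 < k \<and> (u, w) \<in> E ^^ k \<and> (\<forall>j. 0 < j \<and> j < k \<longrightarrow> (u, w) \<notin> E ^^ j)"

definition outN :: "('a \<times> 'a) set \<Rightarrow> nat \<Rightarrow> 'a \<Rightarrow> 'a set" where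
  "outN E k v = {u. dist_is E v u k}"

text \<open>N_k^+(S): vertices u with min over s in S of d(s,u) equal to k\<close>
definition outNS :: "('a \<times> 'a) set \<Rightarrow> nat \<Rightarrow> 'a set \<Rightarrow> 'a set" where
  "outNS E k S = {u. (\<exists>s\<in>S. dist_is E s u k) \<and> (\<forall>s\<in>S. \<forall>j. j < k \<longrightarrow> \<not> dist_is E s u j)}"

definition counterexample :: "real \<Rightarrow> 'a set \<Rightarrow> ('a \<times> 'a) set \<Rightarrow> bool" where
  "counterexample lam V E \<longleftrightarrow> digraph V E \<and>
     (\<forall>v\<in>V. real (card (outN E 2 v)) < lam * real (card (outN E 1 v)))"

definition edge_minimal_counterexample :: "real \<Rightarrow> 'a set \<Rightarrow> ('a \<times> 'a) set \<Rightarrow> bool" where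
  "edge_minimal_counterexample lam V E \<longleftrightarrow> counterexample lam V E \<and>
     (\<forall>E'. E' \<subset> E \<longrightarrow> \<not> counterexample lam V E')"

end

theory Submission
  imports Defs
begin

text \<open>Write \<open>\<partial>A = E``A - A\<close>, so that \<open>N\<^sub>1\<^sup>+(S) = E``S\<close> and \<open>N\<^sub>2\<^sup>+(S) = \<partial>(N\<^sub>1\<^sup>+(S))\<close>.
  Edge-minimality gives \<open>|\<partial>B| \<ge> \<lambda>|B|\<close> for every proper subset \<open>B\<close> of an out-neighbourhood
  \<open>N\<^sub>1\<^sup>+(w)\<close>: otherwise deleting the edges from \<open>w\<close> to \<open>N\<^sub>1\<^sup>+(w) - B\<close> leaves a smaller
  counterexample. Since \<open>|\<partial>A|\<close> is submodular and \<open>|A|\<close> modular, the strict inequality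
  \<open>|\<partial>A| < \<lambda>|A|\<close> passes from \<open>A\<^sub>1 = N\<^sub>1\<^sup>+(S)\<close> and \<open>A\<^sub>2 = N\<^sub>1\<^sup>+(s)\<close> to \<open>A\<^sub>1 \<union> A\<^sub>2\<close>
  whenever \<open>A\<^sub>1 \<inter> A\<^sub>2\<close> satisfies the reverse inequality; induction on \<open>S\<close> finishes.\<close>

definition out_boundary :: "('a \<times> 'a) set \<Rightarrow> 'a set \<Rightarrow> 'a set" where
  "out_boundary E A = E `` A - A"

lemma dist_is_0: "\<not> dist_is E u w 0"
  by (simp add: dist_is_def)

lemma dist_is_1_iff: "dist_is E u w (Suc 0) \<longleftrightarrow> (u, w) \<in> E"
  by (auto simp: dist_is_def)

lemma dist_is_2_iff: "dist_is E u w 2 \<longleftrightarrow> (u, w) \<in> E O E \<and> (u, w) \<notin> E"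
  by (auto simp: dist_is_def numeral_2_eq_2 less_Suc_eq)

lemma outN_1: "outN E 1 v = E `` {v}"
  by (auto simp: outN_def dist_is_1_iff)

lemma outN_2: "outN E 2 v = out_boundary E (E `` {v})"
  by (auto simp: outN_def out_boundary_def dist_is_2_iff)

lemma outNS_1: "outNS E 1 S = E `` S"
  by (auto simp: outNS_def dist_is_1_iff dist_is_0)

lemma outNS_2: "outNS E 2 S = out_boundary E (E `` S)"
proof -
  have "(\<forall>s\<in>S. \<forall>j<2. \<not> dist_is E s u j) \<longleftrightarrow> u \<notin> E `` S" for u
    by (auto simp: numeral_2_eq_2 less_Suc_eq dist_is_0 dist_is_1_iff)
  then show ?thesis
    by (auto simp: outNS_def out_boundary_def dist_is_2_iff)
qed

lemma counterexample_iff_out_boundary: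
  "counterexample lam V E \<longleftrightarrow> digraph V E \<and>
     (\<forall>v\<in>V. real (card (out_boundary E (E `` {v}))) < lam * real (card (E `` {v})))"
  unfolding counterexample_def outN_1 outN_2 ..

lemma finite_Image_of_digraph: "digraph V E \<Longrightarrow> finite (E `` X)"
  unfolding digraph_def using finite_subset by fastforce

lemma finite_out_boundary_of_digraph: "digraph V E \<Longrightarrow> finite (out_boundary E A)"
  unfolding out_boundary_def by (metis finite_Diff finite_Image_of_digraph)

lemma card_out_boundary_submodular:
  assumes "finite (out_boundary E A\<^sub>1)" "finite (out_boundary E A\<^sub>2)"
  shows "card (out_boundary E (A\<^sub>1 \<union> A\<^sub>2)) + card (out_boundary E (A\<^sub>1 \<inter> A\<^sub>2))
     \<le> card (out_boundary E A\<^sub>1) + card (out_boundary E A\<^sub>2)"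
proof -
  let ?X\<^sub>1 = "out_boundary E A\<^sub>1" and ?X\<^sub>2 = "out_boundary E A\<^sub>2"
  let ?P = "out_boundary E (A\<^sub>1 \<union> A\<^sub>2)" and ?Q = "out_boundary E (A\<^sub>1 \<inter> A\<^sub>2)"
  have P: "?P \<subseteq> ?X\<^sub>1 \<union> ?X\<^sub>2" and Q: "?Q \<subseteq> ?X\<^sub>1 \<union> ?X\<^sub>2"
    and PQ: "?P \<inter> ?Q \<subseteq> ?X\<^sub>1 \<inter> ?X\<^sub>2"
    unfolding out_boundary_def by blast+
  have fin: "finite (?X\<^sub>1 \<union> ?X\<^sub>2)"
    using assms by simp
  have "card ?P + card ?Q = card (?P \<union> ?Q) + card (?P \<inter> ?Q)"
    using finite_subset[OF P fin] finite_subset[OF Q fin] by (rule card_Un_Int)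
  also have "\<dots> \<le> card (?X\<^sub>1 \<union> ?X\<^sub>2) + card (?X\<^sub>1 \<inter> ?X\<^sub>2)"
    using fin P Q PQ by (intro add_mono card_mono) auto
  also have "\<dots> = card ?X\<^sub>1 + card ?X\<^sub>2"
    using card_Un_Int[OF assms] by simp
  finally show ?thesis .
qed

lemma out_boundary_bound_Un:
  assumes fin: "finite A\<^sub>1" "finite A\<^sub>2" "finite (out_boundary E A\<^sub>1)" "finite (out_boundary E A\<^sub>2)"
    and bound\<^sub>1: "real (card (out_boundary E A\<^sub>1)) < lam * real (card A\<^sub>1)"
    and bound\<^sub>2: "real (card (out_boundary E A\<^sub>2)) < lam * real (card A\<^sub>2)"
    and expand: "lam * real (card (A\<^sub>1 \<inter> A\<^sub>2)) \<le> real (card (out_boundary E (A\<^sub>1 \<inter> A\<^sub>2)))"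
  shows "real (card (out_boundary E (A\<^sub>1 \<union> A\<^sub>2))) < lam * real (card (A\<^sub>1 \<union> A\<^sub>2))"
proof -
  have "real (card (A\<^sub>1 \<union> A\<^sub>2)) + real (card (A\<^sub>1 \<inter> A\<^sub>2)) = real (card A\<^sub>1) + real (card A\<^sub>2)"
    using card_Un_Int[OF fin(1,2)] by linarith
  then have "lam * real (card (A\<^sub>1 \<union> A\<^sub>2)) + lam * real (card (A\<^sub>1 \<inter> A\<^sub>2))
      = lam * real (card A\<^sub>1) + lam * real (card A\<^sub>2)"
    by (metis distrib_left)
  moreover have "real (card (out_boundary E (A\<^sub>1 \<union> A\<^sub>2))) + real (card (out_boundary E (A\<^sub>1 \<inter> A\<^sub>2)))
      \<le> real (card (out_boundary E A\<^sub>1)) + real (card (out_boundary E A\<^sub>2))"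
    using card_out_boundary_submodular[OF fin(3,4)] by linarith
  ultimately show ?thesis
    using bound\<^sub>1 bound\<^sub>2 expand by linarith
qed

lemma digraph_subset: "digraph V E \<Longrightarrow> E' \<subseteq> E \<Longrightarrow> digraph V E'"
  unfolding digraph_def by blast

lemma card_out_boundary_mono:
  assumes "digraph V E" "E' \<subseteq> E"
  shows "card (out_boundary E' A) \<le> card (out_boundary E A)"
proof (rule card_mono)
  show "finite (out_boundary E A)"
    using assms(1) by (rule finite_out_boundary_of_digraph)
  show "out_boundary E' A \<subseteq> out_boundary E A"
    using assms(2) unfolding out_boundary_def by blast
qed

lemma counterexample_remove_edges_from:
  assumes "counterexample lam V E" and "B \<subseteq> E `` {w}"
    and small: "real (card (out_boundary E B)) < lam * real (card B)"
  shows "counterexample lam V (E - {w} \<times> (E `` {w} - B))"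
    (is "counterexample lam V ?E'")
proof -
  have G: "digraph V E" and bound: "\<And>v. v \<in> V \<Longrightarrow>
      real (card (out_boundary E (E `` {v}))) < lam * real (card (E `` {v}))"
    using assms(1) unfolding counterexample_iff_out_boundary by blast+
  have sub: "?E' \<subseteq> E"
    by blast
  have "real (card (out_boundary ?E' (?E' `` {v}))) < lam * real (card (?E' `` {v}))"
    if "v \<in> V" for v
  proof (cases "v = w")
    case True
    then have "?E' `` {v} = B"
      using assms(2) by blast
    then show ?thesis
      using small card_out_boundary_mono[OF G sub, of B] by simp
  next
    case False
    then have "?E' `` {v} = E `` {v}"
      by blast
    then show ?thesis
      using bound[OF that] card_out_boundary_mono[OF G sub, of "E `` {v}"] by simp
  qed
  then show ?thesis
    using digraph_subset[OF G sub] unfolding counterexample_iff_out_boundary by blast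
qed

lemma edge_minimal_out_boundary_lower_bound:
  assumes "edge_minimal_counterexample lam V E" and "B \<subset> E `` {w}"
  shows "lam * real (card B) \<le> real (card (out_boundary E B))"
proof (rule ccontr)
  assume "\<not> ?thesis"
  then have "counterexample lam V (E - {w} \<times> (E `` {w} - B))"
    using assms by (intro counterexample_remove_edges_from)
      (auto simp: edge_minimal_counterexample_def)
  moreover have "E - {w} \<times> (E `` {w} - B) \<subset> E"
    using assms(2) by auto
  ultimately show False
    using assms(1) by (auto simp: edge_minimal_counterexample_def)
qed

lemma edge_minimal_out_boundary_Image_bound:
  assumes em: "edge_minimal_counterexample lam V E"
    and "finite S" "S \<subseteq> V" "E `` S \<noteq> {}"
  shows "real (card (out_boundary E (E `` S))) < lam * real (card (E `` S))"
  using assms(2-)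
proof (induction S rule: finite_induct)
  case empty
  then show ?case by simp
next
  case (insert s S)
  have G: "digraph V E" and bound\<^sub>s: "real (card (out_boundary E (E `` {s}))) < lam * real (card (E `` {s}))"
    using em insert.prems by (auto simp: edge_minimal_counterexample_def counterexample_iff_out_boundary)
  have split: "E `` insert s S = E `` S \<union> E `` {s}"
    by auto
  consider "E `` S = {}" | "E `` {s} \<subseteq> E `` S" | "E `` S \<noteq> {}" "E `` S \<inter> E `` {s} \<subset> E `` {s}"
    by blast
  then show ?case
  proof cases
    case 1
    then show ?thesis using split bound\<^sub>s by simp
  next
    case 2
    then have "E `` insert s S = E `` S"
      using split by blast
    then show ?thesis
      using insert.IH insert.prems by auto
  next
    case 3
    have "real (card (out_boundary E (E `` S \<union> E `` {s}))) < lam * real (card (E `` S \<union> E `` {s}))"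
    proof (rule out_boundary_bound_Un)
      show "finite (E `` S)" "finite (E `` {s})"
        using G by (rule finite_Image_of_digraph)+
      show "finite (out_boundary E (E `` S))" "finite (out_boundary E (E `` {s}))"
        using G by (rule finite_out_boundary_of_digraph)+
      show "real (card (out_boundary E (E `` S))) < lam * real (card (E `` S))"
        using insert.IH insert.prems 3(1) by blast
      show "real (card (out_boundary E (E `` {s}))) < lam * real (card (E `` {s}))"
        by (fact bound\<^sub>s)
      show "lam * real (card (E `` S \<inter> E `` {s})) \<le> real (card (out_boundary E (E `` S \<inter> E `` {s})))"
        using em 3(2) by (rule edge_minimal_out_boundary_lower_bound)
    qed
    then show ?thesis
      unfolding split .
  qed
qed

theorem lemma1:
  fixes lam :: real and V :: "'a set" and E :: "('a \<times> 'a) set" and S :: "'a set"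
  assumes "lam > 0"
    and "edge_minimal_counterexample lam V E"
    and "S \<subseteq> V"
    and "outNS E 1 S \<noteq> {}"
  shows "real (card (outNS E 2 S)) < lam * real (card (outNS E 1 S))"
proof -
  have "finite S"
    using assms(2,3) finite_subset
    by (auto simp: edge_minimal_counterexample_def counterexample_def digraph_def)
  then show ?thesis
    using edge_minimal_out_boundary_Image_bound[OF assms(2) _ assms(3)] assms(4)
    unfolding outNS_1 outNS_2 by blast
qed

end
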